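(* Let $q$ be a prime power. Then $\mathbb{F}_q$ admits a complete mapping that permutes all elements of $\mathbb{F}_q$ in a single cycle (i.e., of cycle type $x_q$) if and only if $q$ is odd.
   Context: A complete mapping of the field $\mathbb{F}_q$ is a permutation $f$ of $\mathbb{F}_q$ such that $x\mapsto f(x)+x$ is also a permutation of $\mathbb{F}_q$. *)

theory Defs
  imports Main
begin

definition complete_mapping :: "('a::field \<Rightarrow> 'a) \<Rightarrow> bool" where
  "complete_mapping f \<longleftrightarrow> bij f \<and> bij (\<lambda>x. f x + x)"

definition single_cycle :: "('a \<Rightarrow> 'a) \<Rightarrow> bool" where
  "single_cycle f \<longleftrightarrow> bij f \<and> (\<forall>x y. \<exists>n. (f ^^ n) x = y)"

end

(*
  If 2 = 0, a complete mapping f has a fixed point (f x + x = 0 forces f x = - x = x), which a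
  single cycle through a set with at least two elements cannot have; and 2 = 0 holds exactly
  when q is even.

  For odd q the mapping is built along a chain of additive subgroups 0 = H_0 < H_1 < ... < F_q,
  where H_(k+1) = H_k + F_p a for some a outside H_k. A cyclic complete mapping f of H is lifted to
  H + F_p a by acting as f on every coset i a + H, except that i a is sent to (i + 1) a + f 0.
  The lift runs through the cycle of f once in each coset before moving on to the next one, so it
  is again a single cycle; and x \<mapsto> lift x + x sends i a + h to (2 i + [h = 0]) a + (f h + h),
  which determines i and h because 2 is invertible.
*)
theory Submission
  imports Defs "HOL-Number_Theory.Cong"
begin

definition add_subgroup :: "'a::ab_group_add set \<Rightarrow> bool" where
  "add_subgroup H \<longleftrightarrow> 0 \<in> H \<and> (\<forall>x\<in>H. \<forall>y\<in>H. x + y \<in> H) \<and> (\<forall>x\<in>H. - x \<in> H)"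

lemma add_subgroup_diff: "add_subgroup H \<Longrightarrow> x \<in> H \<Longrightarrow> y \<in> H \<Longrightarrow> x - y \<in> H"
  unfolding add_subgroup_def by (metis diff_conv_add_uminus)

lemma add_subgroup_of_int_mult:
  fixes H :: "'a::ring_1 set"
  assumes "add_subgroup H" and "x \<in> H"
  shows "of_int k * x \<in> H"
proof -
  have of_nat_mult: "of_nat n * x \<in> H" for n
    using assms by (induction n) (auto simp: add_subgroup_def distrib_right)
  show ?thesis
  proof (cases k rule: int_cases)
    case (nonneg n)
    then show ?thesis using of_nat_mult by simp
  next
    case (neg n)
    then have "of_int k * x = - (of_nat (Suc n) * x)"
      by (simp only: of_int_minus of_int_of_nat_eq minus_mult_left)
    then show ?thesis
      using of_nat_mult[of "Suc n"] assms(1) unfolding add_subgroup_def by metis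
  qed
qed

definition adjoin :: "'a::ring_1 set \<Rightarrow> 'a \<Rightarrow> 'a set" where
  "adjoin H a = {of_int i * a + h | i h. h \<in> H}"

lemma adjoinI: "h \<in> H \<Longrightarrow> of_int i * a + h \<in> adjoin H a"
  unfolding adjoin_def by blast

lemma adjoinE:
  assumes "x \<in> adjoin H a"
  obtains i h where "x = of_int i * a + h" and "h \<in> H"
  using assms unfolding adjoin_def by blast

lemma subset_adjoin: "H \<subseteq> adjoin H a"
  using adjoinI[of _ H 0 a] by auto

lemma mem_adjoin_self: "0 \<in> H \<Longrightarrow> a \<in> adjoin H a"
  using adjoinI[of 0 H 1 a] by simp

lemma add_subgroup_adjoin:
  assumes "add_subgroup H"
  shows "add_subgroup (adjoin H a)"
  unfolding add_subgroup_def
proof (intro conjI ballI)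
  show "0 \<in> adjoin H a"
    using assms subset_adjoin by (auto simp: add_subgroup_def)
next
  fix x y assume "x \<in> adjoin H a" "y \<in> adjoin H a"
  then obtain i h j g where "x = of_int i * a + h" "h \<in> H" "y = of_int j * a + g" "g \<in> H"
    by (metis adjoinE)
  moreover from this have "x + y = of_int (i + j) * a + (h + g)"
    by (simp add: algebra_simps)
  moreover have "h + g \<in> H"
    using assms \<open>h \<in> H\<close> \<open>g \<in> H\<close> by (simp add: add_subgroup_def)
  ultimately show "x + y \<in> adjoin H a"
    by (metis adjoinI)
next
  fix x assume "x \<in> adjoin H a"
  then obtain i h where "x = of_int i * a + h" "h \<in> H"
    by (rule adjoinE)
  moreover from this have "- x = of_int (- i) * a + - h"
    by simp
  moreover have "- h \<in> H"
    using assms \<open>h \<in> H\<close> by (simp add: add_subgroup_def)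
  ultimately show "- x \<in> adjoin H a"
    by (metis adjoinI)
qed

lemma add_subgroup_induct [case_names zero adjoin]:
  assumes zero: "P {0}"
    and adjoin: "\<And>H a. add_subgroup H \<Longrightarrow> a \<notin> H \<Longrightarrow> P H \<Longrightarrow> P (adjoin H a)"
  shows "P (UNIV :: 'a::{ring_1,finite} set)"
proof -
  have "P UNIV" if "add_subgroup H" and "P H" for H :: "'a set"
    using that
  proof (induction "card (- H)" arbitrary: H rule: less_induct)
    case less
    show ?case
    proof (cases "H = UNIV")
      case True
      with less.prems show ?thesis by simp
    next
      case False
      then obtain a where a: "a \<notin> H" by blast
      have "- adjoin H a \<subset> - H"
        using subset_adjoin mem_adjoin_self a less.prems(1) by (fastforce simp: add_subgroup_def)
      then have "card (- adjoin H a) < card (- H)"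
        by (simp add: psubset_card_mono)
      then show ?thesis
        using less a adjoin add_subgroup_adjoin by blast
    qed
  qed
  moreover have "add_subgroup {0::'a}"
    by (simp add: add_subgroup_def)
  ultimately show ?thesis
    using zero by blast
qed

lemma of_int_left_inverse:
  assumes "prime CHAR('a::ring_1)" and "(of_int k :: 'a) \<noteq> 0"
  obtains u where "of_int u * (of_int k :: 'a) = 1"
proof -
  have "\<not> int CHAR('a) dvd k"
    using assms(2) by (simp add: of_int_eq_0_iff_char_dvd)
  then have "coprime k (int CHAR('a))"
    using assms(1) prime_imp_coprime[of "int CHAR('a)" k] by (simp add: coprime_commute)
  then obtain u v where "u * k + v * int CHAR('a) = 1"
    by (metis bezout_int coprime_iff_gcd_eq_1)
  then have "of_int u * of_int k + of_int v * of_nat CHAR('a) = (1 :: 'a)"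
    by (metis of_int_1 of_int_add of_int_mult of_int_of_nat_eq)
  then show ?thesis
    using that by simp
qed

lemma adjoin_unique:
  fixes H :: "'a::ring_1 set"
  assumes "prime CHAR('a)" and "add_subgroup H" and "a \<notin> H" and "h \<in> H" and "g \<in> H"
    and eq: "of_int i * a + h = of_int j * a + g"
  shows "(of_int i :: 'a) = of_int j \<and> h = g"
proof -
  have "of_int (i - j) * a = g - h"
    using eq by (simp add: algebra_simps)
  then have diff_mem: "of_int (i - j) * a \<in> H"
    using assms(2,4,5) add_subgroup_diff by metis
  have "(of_int (i - j) :: 'a) = 0"
  proof (rule ccontr)
    assume "(of_int (i - j) :: 'a) \<noteq> 0"
    then obtain u where "of_int u * (of_int (i - j) :: 'a) = 1"
      using assms(1) of_int_left_inverse by blast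
    then have "a = of_int u * (of_int (i - j) * a)"
      by (metis mult.assoc mult_1)
    then have "a \<in> H"
      using add_subgroup_of_int_mult[OF assms(2) diff_mem] by metis
    with assms(3) show False ..
  qed
  then show ?thesis
    using eq by simp
qed

lemma card_adjoin:
  fixes H :: "'a::ring_1 set"
  assumes "prime CHAR('a)" and "add_subgroup H" and "a \<notin> H"
  shows "card (adjoin H a) = CHAR('a) * card H"
proof -
  let ?p = "int CHAR('a)"
  let ?g = "\<lambda>(i, h). of_int i * a + h"
  have "?p > 0"
    using assms(1) prime_gt_0_nat by simp
  have "adjoin H a = ?g ` ({0..<?p} \<times> H)"
  proof (intro equalityI subsetI)
    fix x assume "x \<in> adjoin H a"
    then obtain i h where "x = of_int i * a + h" "h \<in> H"
      by (rule adjoinE)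
    moreover have "(of_int (i mod ?p) :: 'a) = of_int i"
      by (simp add: of_int_eq_iff_cong_CHAR cong_def)
    ultimately show "x \<in> ?g ` ({0..<?p} \<times> H)"
      using \<open>?p > 0\<close> by (auto intro!: image_eqI[of _ _ "(i mod ?p, h)"])
  qed (auto intro: adjoinI)
  moreover have "inj_on ?g ({0..<?p} \<times> H)"
  proof (rule inj_onI, clarsimp)
    fix i j h g
    assume "0 \<le> i" "i < ?p" "0 \<le> j" "j < ?p" "h \<in> H" "g \<in> H"
      and "of_int i * a + h = of_int j * a + g"
    then have "(of_int i :: 'a) = of_int j" "h = g"
      using adjoin_unique assms by blast+
    then show "i = j \<and> h = g"
      using \<open>0 \<le> i\<close> \<open>i < ?p\<close> \<open>0 \<le> j\<close> \<open>j < ?p\<close>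
      by (simp add: of_int_eq_iff_cong_CHAR cong_def)
  qed
  ultimately show ?thesis
    by (simp add: card_image card_cartesian_product)
qed

lemma card_UNIV_eq_CHAR_power:
  assumes "prime CHAR('a::{ring_1,finite})"
  obtains k where "card (UNIV :: 'a set) = CHAR('a) ^ k"
proof -
  have "\<exists>k. card (UNIV :: 'a set) = CHAR('a) ^ k"
  proof (induction rule: add_subgroup_induct[where P = "\<lambda>H. \<exists>k. card H = CHAR('a) ^ k"])
    case zero
    show ?case by (auto intro: exI[of _ 0])
  next
    case (adjoin H a)
    then show ?case
      using card_adjoin[OF assms] by (metis power_Suc)
  qed
  then show ?thesis
    using that by blast
qed

definition reaches :: "('a \<Rightarrow> 'a) \<Rightarrow> 'a \<Rightarrow> 'a \<Rightarrow> bool" where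
  "reaches f x y \<longleftrightarrow> (\<exists>n. (f ^^ n) x = y)"

lemma reaches_refl: "reaches f x x"
  unfolding reaches_def by (metis funpow_0)

lemma reaches_trans: "reaches f x y \<Longrightarrow> reaches f y z \<Longrightarrow> reaches f x z"
  unfolding reaches_def by (metis funpow_add comp_apply)

definition single_cycle_on :: "('a \<Rightarrow> 'a) \<Rightarrow> 'a set \<Rightarrow> bool" where
  "single_cycle_on f S \<longleftrightarrow> f ` S \<subseteq> S \<and> (\<forall>x\<in>S. \<forall>y\<in>S. reaches f x y)"

lemma funpow_mem: "f ` S \<subseteq> S \<Longrightarrow> x \<in> S \<Longrightarrow> (f ^^ n) x \<in> S"
  by (induction n) auto

lemma single_cycle_on_image_eq:
  assumes "single_cycle_on f S"
  shows "f ` S = S"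
proof
  show "f ` S \<subseteq> S"
    using assms by (simp add: single_cycle_on_def)
  show "S \<subseteq> f ` S"
  proof
    fix y assume "y \<in> S"
    moreover from this have "f y \<in> S"
      using assms by (auto simp: single_cycle_on_def)
    ultimately obtain n where n: "(f ^^ n) (f y) = y"
      using assms unfolding single_cycle_on_def reaches_def by blast
    show "y \<in> f ` S"
    proof (cases n)
      case 0
      with n \<open>y \<in> S\<close> show ?thesis by (metis funpow_0 image_eqI)
    next
      case (Suc m)
      with n have "y = f ((f ^^ m) (f y))"
        by (simp add: funpow_Suc_right)
      moreover have "(f ^^ m) (f y) \<in> S"
        using assms \<open>y \<in> S\<close> by (auto simp: single_cycle_on_def intro: funpow_mem)
      ultimately show ?thesis by blast
    qed
  qed
qed

lemma funpow_first_hit: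
  assumes "(f ^^ n) x = y"
  obtains m where "(f ^^ m) x = y" and "\<forall>j<m. (f ^^ j) x \<noteq> y"
  using assms exists_least_iff[of "\<lambda>m. (f ^^ m) x = y"] by blast

lemma funpow_path_avoiding_start:
  assumes "(f ^^ n) (f z) = y"
  obtains m where "(f ^^ m) (f z) = y" and "\<forall>j<m. (f ^^ j) (f z) \<noteq> z"
proof -
  obtain m where m: "(f ^^ m) (f z) = y" and least: "\<forall>j<m. (f ^^ j) (f z) \<noteq> y"
    using assms by (rule funpow_first_hit)
  have "(f ^^ j) (f z) \<noteq> z" if "j < m" for j
  proof
    assume returns: "(f ^^ j) (f z) = z"
    have "(f ^^ (m - Suc j)) (f z) = (f ^^ (m - Suc j)) (f ((f ^^ j) (f z)))"
      by (simp add: returns)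
    also have "\<dots> = (f ^^ (m - Suc j + Suc j)) (f z)"
      by (simp only: funpow_add funpow.simps comp_apply)
    also have "\<dots> = y"
      using \<open>j < m\<close> m by simp
    finally show False
      using least[rule_format, of "m - Suc j"] \<open>j < m\<close> by simp
  qed
  with m show ?thesis
    using that by blast
qed

locale cycle_lift =
  fixes H :: "'a::ring_1 set" and a :: 'a and f :: "'a \<Rightarrow> 'a"
  assumes prime_CHAR: "prime CHAR('a)"
    and two_neq_zero: "(2::'a) \<noteq> 0"
    and subgroup: "add_subgroup H"
    and not_mem: "a \<notin> H"
    and cycle: "single_cycle_on f H"
    and complete: "inj_on (\<lambda>x. f x + x) H"
begin

definition H_part :: "'a \<Rightarrow> 'a" where
  "H_part x = (THE h. h \<in> H \<and> (\<exists>i. x = of_int i * a + h))"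

definition lift :: "'a \<Rightarrow> 'a" where
  "lift x = x - H_part x + f (H_part x) + (if H_part x = 0 then a else 0)"

lemma zero_mem: "0 \<in> H"
  using subgroup by (simp add: add_subgroup_def)

lemma f_mem: "h \<in> H \<Longrightarrow> f h \<in> H"
  using cycle by (auto simp: single_cycle_on_def)

lemma decomposition_unique:
  assumes "h \<in> H" and "g \<in> H" and "of_int i * a + h = of_int j * a + g"
  shows "(of_int i :: 'a) = of_int j \<and> h = g"
  using assms adjoin_unique[OF prime_CHAR subgroup not_mem] by blast

lemma H_part_eq: "h \<in> H \<Longrightarrow> H_part (of_int i * a + h) = h"
  unfolding H_part_def by (rule the_equality) (auto dest: decomposition_unique)

lemma lift_eq:
  assumes "h \<in> H"
  shows "lift (of_int i * a + h) = of_int (if h = 0 then i + 1 else i) * a + f h"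
  unfolding lift_def H_part_eq[OF assms] by (simp add: algebra_simps)

lemma lift_mem_adjoin: "x \<in> adjoin H a \<Longrightarrow> lift x \<in> adjoin H a"
  by (auto elim!: adjoinE simp: lift_eq f_mem adjoinI)

lemma of_int_double_cancel:
  assumes "(of_int (2 * i) :: 'a) = of_int (2 * j)"
  shows "(of_int i :: 'a) = of_int j"
proof -
  obtain u where u: "of_int u * (of_int 2 :: 'a) = 1"
    using of_int_left_inverse[OF prime_CHAR] two_neq_zero by (metis of_int_numeral)
  have "(of_int i :: 'a) = of_int u * of_int 2 * of_int i"
    by (simp only: u mult_1)
  also have "\<dots> = of_int u * of_int (2 * j)"
    using assms by (simp only: mult.assoc of_int_mult)
  also have "\<dots> = of_int j"
    by (simp only: of_int_mult mult.assoc[symmetric] u mult_1)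
  finally show ?thesis .
qed

lemma inj_on_lift_plus_id: "inj_on (\<lambda>x. lift x + x) (adjoin H a)"
proof (rule inj_onI)
  fix x y
  assume "x \<in> adjoin H a" "y \<in> adjoin H a" and eq: "lift x + x = lift y + y"
  then obtain i h j g where x: "x = of_int i * a + h" "h \<in> H" and y: "y = of_int j * a + g" "g \<in> H"
    by (metis adjoinE)
  have sum_eq: "lift (of_int k * a + c) + (of_int k * a + c) =
      of_int (2 * k + (if c = 0 then 1 else 0)) * a + (f c + c)" if "c \<in> H" for k c
  proof -
    have "2 * k + (if c = 0 then 1 else 0) = (if c = 0 then k + 1 else k) + k"
      by simp
    then have layer: "of_int (if c = 0 then k + 1 else k) * a + of_int k * a =
        of_int (2 * k + (if c = 0 then 1 else 0)) * a"
      by (simp only: of_int_add distrib_right)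
    have "lift (of_int k * a + c) + (of_int k * a + c) =
        (of_int (if c = 0 then k + 1 else k) * a + f c) + (of_int k * a + c)"
      by (simp only: lift_eq[OF that])
    also have "\<dots> = (of_int (if c = 0 then k + 1 else k) * a + of_int k * a) + (f c + c)"
      by (simp only: add_ac)
    finally show ?thesis
      by (simp only: layer)
  qed
  have "f h + h \<in> H" "f g + g \<in> H"
    using subgroup f_mem x(2) y(2) by (auto simp: add_subgroup_def)
  with eq have layers:
      "(of_int (2 * i + (if h = 0 then 1 else 0)) :: 'a) = of_int (2 * j + (if g = 0 then 1 else 0))"
      and "f h + h = f g + g"
    unfolding x y sum_eq[OF x(2)] sum_eq[OF y(2)] by (blast dest: decomposition_unique)+
  then have "h = g"
    using complete x(2) y(2) by (auto dest: inj_onD)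
  with layers have "(of_int (2 * i) :: 'a) = of_int (2 * j)"
    by (cases "g = 0") (simp_all add: of_int_add)
  then have "(of_int i :: 'a) = of_int j"
    by (rule of_int_double_cancel)
  with x y \<open>h = g\<close> show "x = y"
    by simp
qed

lemma lift_funpow_in_coset:
  assumes "h \<in> H" and "\<forall>j<k. (f ^^ j) h \<noteq> 0"
  shows "(lift ^^ k) (of_int i * a + h) = of_int i * a + (f ^^ k) h"
  using assms(2)
proof (induction k)
  case 0
  then show ?case by simp
next
  case (Suc k)
  have "(f ^^ k) h \<in> H"
    using assms(1) cycle by (auto simp: single_cycle_on_def intro: funpow_mem)
  with Suc show ?case
    by (simp add: lift_eq)
qed

lemma reaches_coset_origin: "h \<in> H \<Longrightarrow> reaches lift (of_int i * a + h) (of_int i * a)"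
proof -
  assume h: "h \<in> H"
  then obtain n where "(f ^^ n) h = 0"
    using cycle zero_mem unfolding single_cycle_on_def reaches_def by blast
  then obtain m where "(f ^^ m) h = 0" and "\<forall>j<m. (f ^^ j) h \<noteq> 0"
    by (rule funpow_first_hit)
  then have "(lift ^^ m) (of_int i * a + h) = of_int i * a"
    using lift_funpow_in_coset[OF h] by simp
  then show ?thesis
    unfolding reaches_def by blast
qed

lemma reaches_next_coset: "g \<in> H \<Longrightarrow> reaches lift (of_int i * a) (of_int (i + 1) * a + g)"
proof -
  assume g: "g \<in> H"
  have f0: "f 0 \<in> H"
    using f_mem zero_mem by blast
  then obtain n where "(f ^^ n) (f 0) = g"
    using cycle g unfolding single_cycle_on_def reaches_def by blast
  then obtain m where m: "(f ^^ m) (f 0) = g" and avoid: "\<forall>j<m. (f ^^ j) (f 0) \<noteq> 0"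
    by (rule funpow_path_avoiding_start)
  have walk: "(lift ^^ m) (of_int (i + 1) * a + f 0) = of_int (i + 1) * a + g"
    using lift_funpow_in_coset[OF f0 avoid, of "i + 1"] unfolding m .
  have step: "lift (of_int i * a) = of_int (i + 1) * a + f 0"
    using lift_eq[OF zero_mem, of i] by simp
  have "(lift ^^ Suc m) (of_int i * a) = of_int (i + 1) * a + g"
    by (simp only: funpow_Suc_right comp_apply step walk)
  then show ?thesis
    unfolding reaches_def by blast
qed

lemma single_cycle_on_lift: "single_cycle_on lift (adjoin H a)"
  unfolding single_cycle_on_def
proof (intro conjI ballI)
  show "lift ` adjoin H a \<subseteq> adjoin H a"
    using lift_mem_adjoin by blast
next
  fix x y assume "x \<in> adjoin H a" "y \<in> adjoin H a"
  then obtain i h j g where x: "x = of_int i * a + h" "h \<in> H" and y: "y = of_int j * a + g" "g \<in> H"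
    by (metis adjoinE)
  have cosets: "reaches lift (of_int i * a) (of_int (i + int k) * a)" for k
  proof (induction k)
    case 0
    show ?case by (simp add: reaches_refl)
  next
    case (Suc k)
    have "reaches lift (of_int (i + int k) * a) (of_int (i + int k + 1) * a + 0)"
      by (rule reaches_next_coset[OF zero_mem])
    then have "reaches lift (of_int i * a) (of_int (i + int k + 1) * a)"
      using reaches_trans[OF Suc.IH] by simp
    then show ?case
      by (simp add: ac_simps)
  qed
  let ?p = "int CHAR('a)"
  define k where "k = nat ((j - i - 1) mod ?p)"
  have "?p > 0"
    using prime_CHAR prime_gt_0_nat by simp
  then have "[int k = j - i - 1] (mod ?p)"
    by (simp add: k_def cong_def)
  then have "[i + int k + 1 = i + (j - i - 1) + 1] (mod ?p)"
    by (intro cong_add cong_refl)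
  then have "[i + int k + 1 = j] (mod ?p)"
    by simp
  then have "(of_int (i + int k + 1) :: 'a) = of_int j"
    by (simp only: of_int_eq_iff_cong_CHAR)
  then have "reaches lift (of_int (i + int k) * a) y"
    using reaches_next_coset[OF y(2), of "i + int k"] y(1) by simp
  then show "reaches lift x y"
    using reaches_trans[OF reaches_trans[OF reaches_coset_origin[OF x(2)] cosets]] x(1) by blast
qed

end

lemma exists_complete_single_cycle:
  assumes "prime CHAR('a::{ring_1,finite})" and "(2::'a) \<noteq> 0"
  obtains f :: "'a::{ring_1,finite} \<Rightarrow> 'a" where "single_cycle_on f UNIV" and "inj (\<lambda>x. f x + x)"
proof -
  have "\<exists>f. single_cycle_on f (UNIV :: 'a set) \<and> inj (\<lambda>x. f x + x)"
  proof (induction rule: add_subgroup_induct[where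
        P = "\<lambda>H. \<exists>f. single_cycle_on f H \<and> inj_on (\<lambda>x. f x + x) H"])
    case zero
    have "single_cycle_on id {0::'a}"
      by (simp add: single_cycle_on_def reaches_refl)
    then show ?case by blast
  next
    case (adjoin H a)
    then obtain f where "single_cycle_on f H" and "inj_on (\<lambda>x. f x + x) H"
      by blast
    with adjoin.hyps assms interpret cycle_lift H a f
      by unfold_locales
    show ?case
      using single_cycle_on_lift inj_on_lift_plus_id by blast
  qed
  then show ?thesis
    using that by blast
qed

lemma prime_CHAR_finite: "prime CHAR('a::{idom,finite})"
  by (rule prime_CHAR_semidom[OF finite_imp_CHAR_pos]) simp

lemma odd_card_iff_two_neq_zero: "odd (card (UNIV :: 'a::{idom,finite} set)) \<longleftrightarrow> (2::'a) \<noteq> 0"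
proof -
  let ?p = "CHAR('a)"
  have p: "prime ?p"
    by (rule prime_CHAR_finite)
  obtain k where k: "card (UNIV :: 'a set) = ?p ^ k"
    using card_UNIV_eq_CHAR_power[OF p] .
  have "card {0::'a, 1} \<le> card (UNIV :: 'a set)"
    by (rule card_mono) simp_all
  then have "k \<noteq> 0"
    using k by (cases k) auto
  have "(2::'a) = 0 \<longleftrightarrow> ?p dvd 2"
    by (metis of_nat_eq_0_iff_char_dvd of_nat_numeral)
  also have "\<dots> \<longleftrightarrow> ?p = 2"
    using p by (auto dest: primes_dvd_imp_eq[OF _ two_is_prime_nat])
  also have "\<dots> \<longleftrightarrow> even (?p ^ k)"
    using p \<open>k \<noteq> 0\<close> prime_odd_nat[of ?p] prime_ge_2_nat[of ?p] by (auto simp: le_less)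
  finally show ?thesis
    using k by simp
qed

lemma complete_mapping_fixed_point:
  fixes f :: "'a::field \<Rightarrow> 'a"
  assumes "complete_mapping f" and "(2::'a) = 0"
  obtains x where "f x = x"
proof -
  obtain x where "0 = f x + x"
    using assms(1) unfolding complete_mapping_def bij_def by blast
  moreover have "x + x = 0"
    using assms(2) by (metis mult_2 mult_zero_left)
  ultimately show ?thesis
    using that by (metis add_right_cancel)
qed

lemma single_cycle_fixed_point:
  assumes "single_cycle f" and "f x = x"
  shows "y = x"
proof -
  have "(f ^^ n) x = x" for n
    by (induction n) (simp_all add: assms(2))
  then show ?thesis
    using assms(1) unfolding single_cycle_def by metis
qed

lemma single_cycle_iff_single_cycle_on_UNIV:
  fixes f :: "'a::finite \<Rightarrow> 'a"
  shows "single_cycle f \<longleftrightarrow> single_cycle_on f UNIV"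
  using single_cycle_on_image_eq[of f UNIV]
  by (auto simp: single_cycle_def single_cycle_on_def reaches_def bij_def finite_UNIV_surj_inj)

theorem corollary1p5:
  shows "(\<exists>f :: 'a::{field,finite} \<Rightarrow> 'a. complete_mapping f \<and> single_cycle f)
           \<longleftrightarrow> odd (card (UNIV :: 'a set))"
proof
  assume "\<exists>f :: 'a \<Rightarrow> 'a. complete_mapping f \<and> single_cycle f"
  then obtain f :: "'a \<Rightarrow> 'a" where complete: "complete_mapping f" and cycle: "single_cycle f"
    by blast
  have "(2::'a) \<noteq> 0"
  proof
    assume "(2::'a) = 0"
    with complete obtain x where "f x = x"
      by (rule complete_mapping_fixed_point)
    with cycle have "(1::'a) = 0"
      by (metis single_cycle_fixed_point)
    then show False
      by simp
  qed
  then show "odd (card (UNIV :: 'a set))"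
    by (simp add: odd_card_iff_two_neq_zero)
next
  assume "odd (card (UNIV :: 'a set))"
  then obtain f :: "'a \<Rightarrow> 'a" where cycle: "single_cycle_on f UNIV" and inj: "inj (\<lambda>x. f x + x)"
    using exists_complete_single_cycle prime_CHAR_finite odd_card_iff_two_neq_zero by metis
  from cycle have "single_cycle f"
    by (simp add: single_cycle_iff_single_cycle_on_UNIV)
  moreover from this inj have "complete_mapping f"
    by (simp add: complete_mapping_def single_cycle_def bij_def finite_UNIV_inj_surj)
  ultimately show "\<exists>f :: 'a \<Rightarrow> 'a. complete_mapping f \<and> single_cycle f"
    by blast
qed

end
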